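(* Let $b,n,c$ be positive integers with $2\leqslant 2b\leqslant n$, and let $\Gamma$ be an abelian group of order $2nbc$. If $\Gamma$ contains an element of order $n$, then there exists a diagonal $\mathrm{MRS}_\Gamma(n;2b;c)$. In particular, this holds if $n$ divides the exponent of $\Gamma$.
   Context: For positive integers $m,n,s,k,c$ and an abelian group $\Gamma$ of order $nkc$, an $\mathrm{MRS}_\Gamma(m,n;s,k;c)$ is a set of $c$ partially filled $m\times n$ arrays (some cells may be empty) with entries in $\Gamma$ such that: every element of $\Gamma$ appears exactly once and in a unique array; in every array each row contains exactly $s$ filled cells and each column contains exactly $k$ filled cells; and there exist $\omega,\delta\in\Gamma$ such that in every array each row sum is $\omega$ and each column sum is $\delta$. $\mathrm{MRS}_\Gamma(n;k;c)$ denotes $\mathrm{MRS}_\Gamma(n,n;k,k;c)$. In an $n\times n$ array, for $0\leqslant \ell\leqslant n-1$ the diagonal $D_\ell$ is the set of cells $(i,j)$ with $j-i\equiv \ell\pmod n$. An $\mathrm{MRS}_\Gamma(n;k;c)$ is diagonal if, in each of its arrays, the filled cells are exactly the cells of $k$ consecutive diagonals $D_{t},\ldots,D_{t+k-1}$ (indices modulo $n$). *)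

theory Defs
  imports Main
begin

definition natmul :: "nat \<Rightarrow> 'a::ab_group_add \<Rightarrow> 'a" where
  "natmul m x = (\<Sum>i<m. x)"

definition elem_order :: "'a::{ab_group_add,finite} \<Rightarrow> nat" where
  "elem_order x = (LEAST m. 0 < m \<and> natmul m x = 0)"

definition group_exponent :: "'a::{ab_group_add,finite} itself \<Rightarrow> nat" where
  "group_exponent _ = (LEAST e. 0 < e \<and> (\<forall>x::'a. natmul e x = 0))"

(* A family of c partially filled m x n arrays: A t i j is the content of cell (i,j)
   of array t (t < c, i < m, j < n); None = empty cell. Values outside the index
   ranges are irrelevant. *)
definition filled_cells :: "nat \<Rightarrow> nat \<Rightarrow> nat \<Rightarrow> (nat \<Rightarrow> nat \<Rightarrow> nat \<Rightarrow> 'a option) \<Rightarrow> (nat \<times> nat \<times> nat) set" where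
  "filled_cells m n c A = {(t,i,j). t < c \<and> i < m \<and> j < n \<and> A t i j \<noteq> None}"

definition is_MRS ::
  "nat \<Rightarrow> nat \<Rightarrow> nat \<Rightarrow> nat \<Rightarrow> nat \<Rightarrow> (nat \<Rightarrow> nat \<Rightarrow> nat \<Rightarrow> 'a::{ab_group_add,finite} option) \<Rightarrow> bool" where
  "is_MRS m n s k c A \<longleftrightarrow>
     card (UNIV :: 'a set) = n * k * c \<and>
     bij_betw (\<lambda>(t,i,j). the (A t i j)) (filled_cells m n c A) (UNIV :: 'a set) \<and>
     (\<forall>t<c. \<forall>i<m. card {j. j < n \<and> A t i j \<noteq> None} = s) \<and>
     (\<forall>t<c. \<forall>j<n. card {i. i < m \<and> A t i j \<noteq> None} = k) \<and>
     (\<exists>\<omega> \<delta>.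
        (\<forall>t<c. \<forall>i<m. (\<Sum>j\<in>{j. j < n \<and> A t i j \<noteq> None}. the (A t i j)) = \<omega>) \<and>
        (\<forall>t<c. \<forall>j<n. (\<Sum>i\<in>{i. i < m \<and> A t i j \<noteq> None}. the (A t i j)) = \<delta>))"

definition on_diagonal :: "nat \<Rightarrow> nat \<Rightarrow> nat \<Rightarrow> nat \<Rightarrow> bool" where
  "on_diagonal n l i j \<longleftrightarrow> (int j - int i) mod int n = int l mod int n"

definition is_diagonal_MRS ::
  "nat \<Rightarrow> nat \<Rightarrow> nat \<Rightarrow> (nat \<Rightarrow> nat \<Rightarrow> nat \<Rightarrow> 'a::{ab_group_add,finite} option) \<Rightarrow> bool" where
  "is_diagonal_MRS n k c A \<longleftrightarrow>
     is_MRS n n k k c A \<and>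
     (\<forall>t<c. \<exists>t0. \<forall>i<n. \<forall>j<n.
         (A t i j \<noteq> None \<longleftrightarrow> (\<exists>l<k. on_diagonal n (t0 + l) i j)))"

end

theory Submission
  imports Defs "HOL-Computational_Algebra.Primes"
begin

text \<open>Let \<open>g\<close> have order \<open>n\<close> and \<open>H = \<langle>g\<rangle>\<close>. The quotient \<open>\<Gamma>/H\<close> has even order \<open>2bc\<close>,
  so it contains an element of order 2 and doubling on \<open>\<Gamma>/H\<close> is not onto: some \<open>w\<close> is not
  congruent to any \<open>y + y\<close> modulo \<open>H\<close>. The cosets of \<open>H\<close> then split into \<open>bc\<close> pairs
  \<open>{x + H, w - x + H}\<close>, which gives representatives \<open>r 0, \<dots>, r (2bc - 1)\<close> of all cosets
  with \<open>r (2q) + r (2q + 1) = w\<close>.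

  In array \<open>t\<close>, the cell of row \<open>i\<close> on diagonal \<open>D\<^sub>l\<close> (\<open>l < 2b\<close>) receives
  \<open>r (2bt + l) + i g\<close> for even \<open>l\<close> and \<open>r (2bt + l) - i g\<close> for odd \<open>l\<close>. Each row meets the
  diagonals \<open>D\<^sub>2\<^sub>p\<close> and \<open>D\<^sub>2\<^sub>p\<^sub>+\<^sub>1\<close> once, where they contribute \<open>w\<close>; in column \<open>j\<close> they
  lie in the consecutive rows \<open>j - 2p\<close> and \<open>j - 2p - 1\<close> and contribute \<open>w + g\<close>. As \<open>i\<close> runs
  through \<open>\<int>\<^sub>n\<close>, diagonal \<open>D\<^sub>l\<close> of array \<open>t\<close> runs through the coset of \<open>r (2bt + l)\<close>, so
  every element of \<open>\<Gamma>\<close> is used exactly once.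

  If \<open>n\<close> divides the exponent, an element of maximal order has order equal to the exponent,
  and a suitable multiple of it has order \<open>n\<close>.\<close>

lemma natmul_Suc: "natmul (Suc m) x = x + natmul m x"
  by (simp add: natmul_def)

lemma natmul_0 [simp]: "natmul 0 x = 0"
  by (simp add: natmul_def)

lemma natmul_zero_right [simp]: "natmul m 0 = 0"
  by (simp add: natmul_def)

lemma natmul_add: "natmul (a + b) x = natmul a x + natmul b x"
  by (induction a) (simp_all add: natmul_Suc add.assoc)

lemma natmul_mult: "natmul (a * b) x = natmul a (natmul b x)"
  by (induction a) (simp_all add: natmul_Suc natmul_add)

lemma natmul_add_right: "natmul m (x + y) = natmul m x + natmul m y"
  by (simp add: natmul_def sum.distrib)

lemma natmul_minus: "natmul m (- x) = - natmul m x"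
  by (simp add: natmul_def sum_negf)

lemma natmul_commute: "natmul a (natmul b x) = natmul b (natmul a x)"
  by (metis mult.commute natmul_mult)

lemma exists_natmul_eq_0:
  fixes x :: "'a::{ab_group_add,finite}"
  shows "\<exists>m>0. natmul m x = 0"
proof -
  have "\<not> inj (\<lambda>m::nat. natmul m x)"
    using finite_imageD[of "\<lambda>m::nat. natmul m x" UNIV] by auto
  then obtain i j where "i < j" "natmul i x = natmul j x"
    by (metis linorder_inj_onI')
  then have "natmul (j - i) x = 0"
    using natmul_add[of "j - i" i x] by simp
  then show ?thesis
    using \<open>i < j\<close> by (intro exI[of _ "j - i"]) simp
qed

lemma elem_order_pos: "0 < elem_order x"
  and natmul_elem_order: "natmul (elem_order x) x = 0"
  using LeastI_ex[OF exists_natmul_eq_0[of x]] by (simp_all add: elem_order_def)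

lemma natmul_elem_order_mult: "natmul (elem_order x * k) x = 0"
  by (metis mult.commute natmul_mult natmul_elem_order natmul_zero_right)

lemma natmul_eq_0_iff: "natmul m x = 0 \<longleftrightarrow> elem_order x dvd m"
proof
  assume "natmul m x = 0"
  have "natmul m x = natmul (m mod elem_order x) x"
    using natmul_add[of "elem_order x * (m div elem_order x)" "m mod elem_order x" x]
    by (simp add: natmul_elem_order_mult)
  then have "natmul (m mod elem_order x) x = 0"
    using \<open>natmul m x = 0\<close> by simp
  then have "\<not> (0 < m mod elem_order x \<and> m mod elem_order x < elem_order x)"
    unfolding elem_order_def using not_less_Least by blast
  then show "elem_order x dvd m"
    using elem_order_pos[of x] by (simp add: dvd_eq_mod_eq_0)
next
  assume "elem_order x dvd m"
  then show "natmul m x = 0"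
    by (auto simp: natmul_elem_order_mult)
qed

lemma natmul_eq_natmul_iff: "natmul i x = natmul j x \<longleftrightarrow> i mod elem_order x = j mod elem_order x"
proof -
  have "natmul i x = natmul j x \<longleftrightarrow> i mod elem_order x = j mod elem_order x" if "i \<le> j" for i j
  proof -
    have "natmul j x = natmul (j - i) x + natmul i x"
      using that by (simp flip: natmul_add)
    then show ?thesis
      using that mod_eq_dvd_iff_nat[OF that, of "elem_order x"]
      by (simp add: natmul_eq_0_iff eq_commute[of "i mod _"])
  qed
  then show ?thesis
    by (metis nle_le)
qed

lemma elem_order_eqI:
  assumes "\<And>m. natmul m x = 0 \<longleftrightarrow> d dvd m"
  shows "elem_order x = d"
  using assms natmul_eq_0_iff[of _ x] by (meson dvd_antisym dvd_refl)

lemma elem_order_natmul: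
  assumes "k * d = elem_order x"
  shows "elem_order (natmul k x) = d"
proof (rule elem_order_eqI)
  have "0 < k"
    using assms elem_order_pos[of x] by (auto intro: gr0I)
  then show "natmul m (natmul k x) = 0 \<longleftrightarrow> d dvd m" for m
    by (simp add: natmul_mult[symmetric] natmul_eq_0_iff flip: assms)
qed

lemma elem_order_add_coprime:
  assumes "coprime (elem_order x) (elem_order y)"
  shows "elem_order (x + y) = elem_order x * elem_order y"
proof (rule elem_order_eqI)
  fix m
  show "natmul m (x + y) = 0 \<longleftrightarrow> elem_order x * elem_order y dvd m"
  proof
    assume "natmul m (x + y) = 0"
    then have "natmul m x + natmul m y = 0"
      by (simp only: natmul_add_right)
    then have opp: "natmul m y = - natmul m x" "natmul m x = - natmul m y"
      by (simp_all only: eq_neg_iff_add_eq_0 add.commute[of "natmul m y"])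
    have "natmul (elem_order x * m) y = - natmul m (natmul (elem_order x) x)"
      by (simp only: natmul_mult opp(1) natmul_minus natmul_commute[of "elem_order x"])
    moreover have "natmul (elem_order y * m) x = - natmul m (natmul (elem_order y) y)"
      by (simp only: natmul_mult opp(2) natmul_minus natmul_commute[of "elem_order y"])
    ultimately have "natmul (elem_order x * m) y = 0" and "natmul (elem_order y * m) x = 0"
      by (simp_all add: natmul_elem_order)
    then have "elem_order x dvd m" and "elem_order y dvd m"
      using assms by (simp_all add: natmul_eq_0_iff coprime_dvd_mult_right_iff coprime_commute)
    then show "elem_order x * elem_order y dvd m"
      using assms by (simp add: divides_mult)
  next
    assume dvd: "elem_order x * elem_order y dvd m"
    have "natmul m x = 0" and "natmul m y = 0"
      using dvd_mult_left[OF dvd] dvd_mult_right[OF dvd] by (simp_all add: natmul_eq_0_iff)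
    then show "natmul m (x + y) = 0"
      by (simp add: natmul_add_right)
  qed
qed

text \<open>If the order of \<open>y\<close> does not divide the order of \<open>z\<close>, some prime \<open>p\<close> occurs in it to a
  higher power \<open>p\<^sup>a\<close>; adding an element of order \<open>p\<^sup>a\<close> to a multiple of \<open>z\<close> whose order is
  the \<open>p\<close>-free part of \<open>elem_order z\<close> produces an element of larger order.\<close>
lemma elem_order_dvd_max_elem_order:
  fixes y z :: "'a::{ab_group_add,finite}"
  assumes max: "\<And>y::'a. elem_order y \<le> elem_order z"
  shows "elem_order y dvd elem_order z"
proof (rule ccontr)
  let ?t = "elem_order y" and ?M = "elem_order z"
  assume "\<not> ?t dvd ?M"
  then obtain p where p: "prime p" "multiplicity p ?M < multiplicity p ?t"
    using multiplicity_le_imp_dvd[of ?t ?M] elem_order_pos[of y] not_le by blast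
  define a where "a = multiplicity p ?t"
  define b where "b = multiplicity p ?M"
  obtain s where s: "?t = p ^ a * s"
    unfolding a_def using multiplicity_dvd by blast
  obtain r where r: "?M = p ^ b * r"
    unfolding b_def using multiplicity_dvd by blast
  have "0 < r"
    using r elem_order_pos[of z] by (auto intro: gr0I)
  have "0 < p"
    using p(1) prime_gt_0_nat by blast
  have "?M div p ^ b = r"
    using r \<open>0 < p\<close> by simp
  then have "\<not> p dvd r"
    using multiplicity_decompose[of ?M p] elem_order_pos[of z] prime_gt_1_nat[OF p(1)]
    by (auto simp: b_def)
  then have "coprime (p ^ a) r"
    using p(1) by (simp add: prime_imp_coprime)
  moreover have "elem_order (natmul s y) = p ^ a"
    by (rule elem_order_natmul) (simp add: s mult.commute)
  moreover have "elem_order (natmul (p ^ b) z) = r"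
    by (rule elem_order_natmul) (simp add: r)
  ultimately have "elem_order (natmul s y + natmul (p ^ b) z) = p ^ a * r"
    by (simp add: elem_order_add_coprime)
  moreover have "p ^ b < p ^ a"
    using p prime_gt_1_nat by (simp add: a_def b_def power_strict_increasing)
  then have "?M < p ^ a * r"
    using r \<open>0 < r\<close> by simp
  ultimately show False
    using max[of "natmul s y + natmul (p ^ b) z"] by simp
qed

lemma group_exponent_eq_max_elem_order:
  fixes z :: "'a::{ab_group_add,finite}"
  assumes max: "\<And>y::'a. elem_order y \<le> elem_order z"
  shows "group_exponent TYPE('a) = elem_order z"
proof -
  let ?E = "group_exponent TYPE('a)"
  have z: "0 < elem_order z \<and> (\<forall>x::'a. natmul (elem_order z) x = 0)"
    using elem_order_pos elem_order_dvd_max_elem_order[OF max] natmul_eq_0_iff by blast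
  then have E: "0 < ?E \<and> (\<forall>x::'a. natmul ?E x = 0)"
    unfolding group_exponent_def by (rule LeastI)
  have "?E \<le> elem_order z"
    unfolding group_exponent_def using z by (rule Least_le)
  moreover have "elem_order z dvd ?E"
    using E natmul_eq_0_iff by blast
  ultimately show ?thesis
    using E by (simp add: dvd_imp_le le_antisym)
qed

lemma exists_elem_order_eq:
  assumes "n dvd group_exponent TYPE('a::{ab_group_add,finite})" "0 < n"
  shows "\<exists>x::'a. elem_order x = n"
proof -
  let ?orders = "range (elem_order :: 'a \<Rightarrow> nat)"
  have "Max ?orders \<in> ?orders"
    by (rule Max_in) auto
  then obtain z :: 'a where "elem_order z = Max ?orders"
    by (metis rangeE)
  then have max: "\<And>y::'a. elem_order y \<le> elem_order z"
    by simp
  obtain k where "elem_order z = k * n"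
    using assms(1) group_exponent_eq_max_elem_order[OF max] by (metis dvdE mult.commute)
  then show ?thesis
    using elem_order_natmul[of k n z] by auto
qed

locale add_subgroup =
  fixes H :: "'a::{ab_group_add,finite} set"
  assumes zero_mem: "0 \<in> H"
    and add_mem: "a \<in> H \<Longrightarrow> b \<in> H \<Longrightarrow> a + b \<in> H"
    and uminus_mem: "a \<in> H \<Longrightarrow> - a \<in> H"
begin

lemma diff_mem: "a \<in> H \<Longrightarrow> b \<in> H \<Longrightarrow> a - b \<in> H"
  using add_mem[of a "- b"] uminus_mem[of b] by simp

lemma uminus_mem_iff [simp]: "- a \<in> H \<longleftrightarrow> a \<in> H"
  using uminus_mem[of a] uminus_mem[of "- a"] by auto

lemma diff_mem_commute: "a - b \<in> H \<longleftrightarrow> b - a \<in> H"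
  by (metis minus_diff_eq uminus_mem_iff)

lemma mem_coset_iff: "y \<in> (+) x ` H \<longleftrightarrow> y - x \<in> H"
  by (auto intro: image_eqI[of _ _ "y - x"])

lemma card_coset: "card ((+) x ` H) = card H"
  by (simp add: card_image)

lemma card_pos: "0 < card H"
  using zero_mem by (auto simp: card_gt_0_iff)

definition sign_coset_rel :: "('a \<times> 'a) set" where
  "sign_coset_rel = {(x, y). x + x \<notin> H \<and> y + y \<notin> H \<and> (y - x \<in> H \<or> y + x \<in> H)}"

lemma equiv_sign_coset_rel: "equiv {x. x + x \<notin> H} sign_coset_rel"
proof (rule equivI)
  show "refl_on {x. x + x \<notin> H} sign_coset_rel" "sym sign_coset_rel"
    unfolding refl_on_def sym_def sign_coset_rel_def using zero_mem uminus_mem[of "_ - _"]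
    by (auto simp: add.commute)
  have "z - x \<in> H \<or> z + x \<in> H" if "y - x \<in> H \<or> y + x \<in> H" "z - y \<in> H \<or> z + y \<in> H" for x y z
    using that add_mem[of "z - y" "y - x"] diff_mem[of "z + y" "y - x"]
      add_mem[of "z - y" "y + x"] diff_mem[of "z + y" "y + x"]
    by (auto simp: algebra_simps)
  then show "trans sign_coset_rel"
    unfolding trans_def sign_coset_rel_def by blast
qed (auto simp: sign_coset_rel_def)

lemma sign_coset_rel_class:
  assumes "x + x \<notin> H"
  shows "sign_coset_rel `` {x} = (+) x ` H \<union> (+) (- x) ` H"
proof -
  have double_not_mem: "y + y \<notin> H" if y_mem: "y \<in> (+) x ` H \<union> (+) (- x) ` H" for y
  proof
    assume "y + y \<in> H"
    obtain h where "h \<in> H" "y = x + h \<or> y = - x + h"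
      using y_mem by auto
    then have "x + x = y + y - (h + h) \<or> x + x = h + h - (y + y)"
      by (auto simp: algebra_simps)
    moreover have "y + y - (h + h) \<in> H" "h + h - (y + y) \<in> H"
      using \<open>y + y \<in> H\<close> \<open>h \<in> H\<close> by (simp_all add: diff_mem add_mem)
    ultimately show False
      using assms by metis
  qed
  have "y \<in> sign_coset_rel `` {x} \<longleftrightarrow> y \<in> (+) x ` H \<union> (+) (- x) ` H" for y
    using double_not_mem assms mem_coset_iff[of y x] mem_coset_iff[of y "- x"]
    unfolding sign_coset_rel_def by auto
  then show ?thesis
    by blast
qed

lemma card_sign_coset_rel_class:
  assumes "x + x \<notin> H"
  shows "card (sign_coset_rel `` {x}) = 2 * card H"
proof -
  have "(+) x ` H \<inter> (+) (- x) ` H = {}"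
  proof (rule ccontr)
    assume "(+) x ` H \<inter> (+) (- x) ` H \<noteq> {}"
    then obtain h h' where "h \<in> H" "h' \<in> H" "x + h = - x + h'"
      by auto
    then have "x + x = h' - h" and "h' - h \<in> H"
      by (auto simp: algebra_simps diff_mem)
    then show False
      using assms by simp
  qed
  then show ?thesis
    by (simp add: sign_coset_rel_class[OF assms] card_Un_disjoint card_image inj_on_def)
qed

lemma double_card_dvd_card_non_halves: "2 * card H dvd card {x. x + x \<notin> H}"
proof -
  let ?S = "{x. x + x \<notin> H}"
  have "2 * card H * card (?S // sign_coset_rel) = card (\<Union>(?S // sign_coset_rel))"
  proof (rule card_partition)
    show "card X = 2 * card H" if "X \<in> ?S // sign_coset_rel" for X
      using that card_sign_coset_rel_class by (auto elim: quotientE)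
    show "X \<inter> Y = {}" if "X \<in> ?S // sign_coset_rel" "Y \<in> ?S // sign_coset_rel" "X \<noteq> Y" for X Y
      using quotient_disj[OF equiv_sign_coset_rel] that by blast
  qed (simp_all add: finite_quotient)
  then have "card ?S = 2 * card H * card (?S // sign_coset_rel)"
    by (simp add: Union_quotient[OF equiv_sign_coset_rel])
  then show ?thesis
    by simp
qed

text \<open>This is Cauchy's theorem for the prime 2 in the quotient by \<open>H\<close>, counted in the group itself.\<close>
lemma double_card_le_card_halves:
  assumes card_UNIV: "card (UNIV :: 'a set) = 2 * card H * m"
  shows "2 * card H \<le> card {x. x + x \<in> H}"
proof -
  let ?K = "{x. x + x \<in> H}"
  have "card ?K + card {x. x + x \<notin> H} = card (?K \<union> {x. x + x \<notin> H})"
    by (rule card_Un_disjoint[symmetric]) auto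
  also have "?K \<union> {x. x + x \<notin> H} = UNIV"
    by auto
  finally have "card ?K = card (UNIV :: 'a set) - card {x. x + x \<notin> H}"
    by simp
  then have "2 * card H dvd card ?K"
    using double_card_dvd_card_non_halves card_UNIV by (simp add: dvd_diff_nat)
  moreover have "card H \<le> card ?K"
    using add_mem by (intro card_mono) auto
  ultimately show ?thesis
    using card_pos by (simp add: dvd_imp_le)
qed

text \<open>If every \<open>w\<close> were congruent modulo \<open>H\<close> to a double \<open>y\<^sub>w + y\<^sub>w\<close>, the map
  \<open>(w, k) \<mapsto> (y\<^sub>w + k, w - 2 (y\<^sub>w + k))\<close> would embed \<open>UNIV \<times> {k. k + k \<in> H}\<close> into \<open>UNIV \<times> H\<close>.\<close>
lemma exists_non_double_coset:
  assumes card_UNIV: "card (UNIV :: 'a set) = 2 * card H * m"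
  shows "\<exists>w. \<forall>y. y + y - w \<notin> H"
proof (rule ccontr)
  assume "\<not> ?thesis"
  then obtain y where y: "\<And>w. y w + y w - w \<in> H"
    by metis
  define K where "K = {k. k + k \<in> H}"
  define f where "f = (\<lambda>(w, k). (y w + k, w - (y w + k) - (y w + k)))"
  have "inj_on f (UNIV \<times> K)"
    by (auto simp: inj_on_def f_def)
  moreover have "f ` (UNIV \<times> K) \<subseteq> UNIV \<times> H"
  proof -
    have "w - (y w + k) - (y w + k) \<in> H" if "k \<in> K" for w k
    proof -
      have "w - (y w + k) - (y w + k) = - (y w + y w - w) - (k + k)"
        by (simp add: algebra_simps)
      also have "\<dots> \<in> H"
        using y[of w] that by (intro diff_mem[OF uminus_mem]) (simp_all add: K_def)
      finally show ?thesis .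
    qed
    then show ?thesis
      by (auto simp: f_def)
  qed
  ultimately have "card ((UNIV :: 'a set) \<times> K) \<le> card ((UNIV :: 'a set) \<times> H)"
    by (intro card_inj_on_le) auto
  then have "card K \<le> card H"
    by (simp add: card_cartesian_product finite_UNIV_card_ge_0)
  then show False
    using double_card_le_card_halves[OF card_UNIV] card_pos by (simp add: K_def)
qed

text \<open>The \<open>2 * card X\<close> cosets \<open>x + H\<close> and \<open>w - x + H\<close> for \<open>x \<in> X\<close> are pairwise distinct.\<close>
definition coset_separated :: "'a \<Rightarrow> 'a set \<Rightarrow> bool" where
  "coset_separated w X \<longleftrightarrow> (\<forall>x\<in>X. \<forall>x'\<in>X. (x \<noteq> x' \<longrightarrow> x - x' \<notin> H) \<and> x + x' - w \<notin> H)"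

lemma exists_coset_separated_set:
  assumes card_UNIV: "card (UNIV :: 'a set) = 2 * card H * m"
    and w: "\<And>y. y + y - w \<notin> H"
    and "k \<le> m"
  shows "\<exists>X. card X = k \<and> coset_separated w X"
  using \<open>k \<le> m\<close>
proof (induction k)
  case 0
  show ?case
    by (intro exI[of _ "{}"]) (simp add: coset_separated_def)
next
  case (Suc k)
  then obtain X where card_X: "card X = k" and X: "coset_separated w X"
    by auto
  define B where "B = (\<Union>x\<in>X. (+) x ` H \<union> (+) (w - x) ` H)"
  have "card B \<le> (\<Sum>x\<in>X. card ((+) x ` H \<union> (+) (w - x) ` H))"
    unfolding B_def by (rule card_UN_le) simp
  also have "\<dots> \<le> (\<Sum>x\<in>X. 2 * card H)"
    by (rule sum_mono) (metis card_Un_le card_coset mult_2)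
  also have "\<dots> < card (UNIV :: 'a set)"
    using card_X Suc.prems card_UNIV card_pos by simp
  finally obtain y where "y \<notin> B"
    by (metis UNIV_I card_mono finite not_le subsetI)
  then have y: "y - x \<notin> H" "y + x - w \<notin> H" if "x \<in> X" for x
    using that mem_coset_iff[of y x] mem_coset_iff[of y "w - x"]
    by (auto simp: B_def diff_diff_eq2 algebra_simps)
  then have "y \<notin> X"
    using zero_mem by force
  have "coset_separated w (insert y X)"
    using X y w diff_mem_commute by (auto simp: coset_separated_def add.commute)
  then show ?case
    using card_X \<open>y \<notin> X\<close> by (intro exI[of _ "insert y X"]) auto
qed

lemma exists_paired_coset_representatives:
  assumes card_UNIV: "card (UNIV :: 'a set) = 2 * card H * m"
  shows "\<exists>w r. (\<forall>k<2 * m. \<forall>k'<2 * m. k \<noteq> k' \<longrightarrow> r k - r k' \<notin> H)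
               \<and> (\<forall>q<m. r (2 * q) + r (2 * q + 1) = w)"
proof -
  obtain w where w: "\<And>y. y + y - w \<notin> H"
    using exists_non_double_coset[OF card_UNIV] by blast
  obtain X where card_X: "card X = m" and X: "coset_separated w X"
    using exists_coset_separated_set[OF card_UNIV w order.refl] by blast
  obtain x where x: "bij_betw x {0..<m} X"
    using ex_bij_betw_nat_finite[of X] card_X by auto
  define r where "r k = (if even k then x (k div 2) else w - x (k div 2))" for k
  have "r k - r k' \<notin> H" if "k < 2 * m" "k' < 2 * m" "k \<noteq> k'" for k k'
  proof -
    have in_X: "x (k div 2) \<in> X" "x (k' div 2) \<in> X"
      using bij_betwE[OF x] that by auto
    have "x (k div 2) \<noteq> x (k' div 2)" if "even k = even k'"
    proof
      assume "x (k div 2) = x (k' div 2)"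
      then have "k div 2 = k' div 2"
        using bij_betw_imp_inj_on[OF x] \<open>k < 2 * m\<close> \<open>k' < 2 * m\<close> by (auto dest: inj_onD)
      then show False
        using \<open>k \<noteq> k'\<close> that by (metis div_mult_mod_eq odd_iff_mod_2_eq_one mod2_eq_if)
    qed
    then show ?thesis
      using X in_X diff_mem_commute[of "x (k div 2)" "x (k' div 2)"]
        uminus_mem_iff[of "x (k div 2) + x (k' div 2) - w"]
      by (auto simp: coset_separated_def r_def algebra_simps)
  qed
  moreover have "r (2 * q) + r (2 * q + 1) = w" for q
    by (simp add: r_def)
  ultimately show ?thesis
    by blast
qed

end

text \<open>For \<open>i < n\<close>, cell \<open>(i, j)\<close> lies on \<open>D\<^sub>l\<close> with \<open>l = diag_index n i j\<close>; adding \<open>n\<close>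
  avoids truncated subtraction.\<close>
definition diag_index :: "nat \<Rightarrow> nat \<Rightarrow> nat \<Rightarrow> nat" where
  "diag_index n i j = (j + n - i) mod n"

lemma int_diag_index:
  assumes "i < n"
  shows "int (diag_index n i j) = (int j - int i) mod int n"
proof -
  have "int (j + n - i) = (int j - int i) + int n"
    using assms by simp
  then show ?thesis
    unfolding diag_index_def by (simp add: zmod_int)
qed

lemma on_diagonal_iff_diag_index:
  assumes "i < n" "l < n"
  shows "on_diagonal n l i j \<longleftrightarrow> diag_index n i j = l"
proof -
  have "on_diagonal n l i j \<longleftrightarrow> int (diag_index n i j) = int l"
    using assms by (simp add: on_diagonal_def int_diag_index)
  then show ?thesis
    by simp
qed

lemma diag_index_add_mod:
  assumes "i < n" "l < n"
  shows "diag_index n i ((i + l) mod n) = l"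
proof -
  have "int (diag_index n i ((i + l) mod n)) = ((int i + int l) mod int n - int i) mod int n"
    using assms by (simp add: int_diag_index zmod_int)
  also have "\<dots> = int l"
    using assms by (simp add: mod_diff_left_eq)
  finally show ?thesis
    by simp
qed

lemma diag_index_diff_mod:
  assumes "j < n" "l < n"
  shows "diag_index n ((j + n - l) mod n) j = l"
proof -
  have "int (diag_index n ((j + n - l) mod n) j) = (int j - (int j + int n - int l) mod int n) mod int n"
    using assms by (simp add: int_diag_index zmod_int of_nat_diff)
  also have "\<dots> = int l"
    using assms by (simp add: mod_diff_right_eq)
  finally show ?thesis
    by simp
qed

lemma add_diag_index_mod:
  assumes "i < n" "j < n"
  shows "(i + diag_index n i j) mod n = j"
proof -
  have "int ((i + diag_index n i j) mod n) = (int i + (int j - int i) mod int n) mod int n"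
    using assms by (simp add: int_diag_index zmod_int)
  also have "\<dots> = int j"
    using assms by (simp add: mod_add_right_eq)
  finally show ?thesis
    by simp
qed

lemma diff_diag_index_mod:
  assumes "i < n" "j < n"
  shows "(j + n - diag_index n i j) mod n = i"
proof -
  have "diag_index n i j < n"
    using assms by (simp add: diag_index_def)
  then have "int ((j + n - diag_index n i j) mod n)
      = (int j + int n - (int j - int i) mod int n) mod int n"
    using assms by (simp add: int_diag_index zmod_int of_nat_diff)
  also have "\<dots> = int i"
    using assms by (simp add: mod_diff_right_eq)
  finally show ?thesis
    by simp
qed

lemma bij_betw_row_diagonals:
  assumes "i < n" "d \<le> n"
  shows "bij_betw (\<lambda>l. (i + l) mod n) {..<d} {j. j < n \<and> diag_index n i j < d}"
  by (rule bij_betw_byWitness[where f' = "diag_index n i"])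
    (use assms in \<open>auto simp: diag_index_add_mod add_diag_index_mod\<close>)

lemma bij_betw_column_diagonals:
  assumes "j < n" "d \<le> n"
  shows "bij_betw (\<lambda>l. (j + n - l) mod n) {..<d} {i. i < n \<and> diag_index n i j < d}"
  by (rule bij_betw_byWitness[where f' = "\<lambda>i. diag_index n i j"])
    (use assms in \<open>auto simp: diag_index_diff_mod diff_diag_index_mod\<close>)

lemma sum_lessThan_double:
  fixes f :: "nat \<Rightarrow> 'a::comm_monoid_add"
  shows "(\<Sum>l<2 * b. f l) = (\<Sum>p<b. f (2 * p) + f (2 * p + 1))"
  by (induction b) (simp_all add: algebra_simps)

definition multiples :: "'a::ab_group_add \<Rightarrow> 'a set" where
  "multiples x = range (\<lambda>i. natmul i x)"

lemma natmul_in_multiples [simp]: "natmul i x \<in> multiples x"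
  by (simp add: multiples_def)

lemma add_subgroup_multiples: "add_subgroup (multiples x)"
proof
  show "0 \<in> multiples x"
    using natmul_in_multiples[of 0 x] by simp
  show "a + b \<in> multiples x" if "a \<in> multiples x" "b \<in> multiples x" for a b
    using that by (auto simp: multiples_def simp flip: natmul_add)
  show "- a \<in> multiples x" if a_mem: "a \<in> multiples x" for a
  proof -
    obtain i where a: "a = natmul i x"
      using a_mem unfolding multiples_def by blast
    obtain k where k: "elem_order x = Suc k"
      using elem_order_pos[of x] gr0_conv_Suc by blast
    have "natmul (i * k) x + a = natmul (elem_order x * i) x"
      by (simp add: a k natmul_add[symmetric] add.commute mult.commute)
    then have "natmul (i * k) x + a = 0"
      by (simp add: natmul_elem_order_mult)
    then have "- a = natmul (i * k) x"
      by (metis add.commute neg_eq_iff_add_eq_0)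
    then show ?thesis
      by simp
  qed
qed

lemma inj_on_natmul: "inj_on (\<lambda>i. natmul i x) {..<elem_order x}"
  by (rule inj_onI) (simp add: natmul_eq_natmul_iff)

lemma card_multiples: "card (multiples x) = elem_order x"
proof -
  have "multiples x = (\<lambda>i. natmul i x) ` {..<elem_order x}"
    unfolding multiples_def using elem_order_pos[of x]
    by (auto simp: natmul_eq_natmul_iff intro: image_eqI[of _ _ "_ mod elem_order x"])
  then show ?thesis
    by (simp add: card_image[OF inj_on_natmul])
qed

lemma mult_add_less_mult:
  fixes d t l c :: nat
  assumes "t < c" "l < d"
  shows "d * t + l < d * c"
proof -
  have "d * t + l < d * Suc t"
    using assms(2) by simp
  also have "\<dots> \<le> d * c"
    using assms(1) by (metis Suc_leI mult_le_mono2)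
  finally show ?thesis .
qed

lemma mult_add_eq_mult_add_iff:
  fixes d t l t' l' :: nat
  assumes "l < d" "l' < d"
  shows "d * t + l = d * t' + l' \<longleftrightarrow> t = t' \<and> l = l'"
proof -
  have "t = (d * t + l) div d" "l = (d * t + l) mod d"
    "t' = (d * t' + l') div d" "l' = (d * t' + l') mod d"
    using assms by simp_all
  then show ?thesis
    by metis
qed

locale diagonal_construction =
  fixes g :: "'a::{ab_group_add,finite}" and n b c :: nat and r :: "nat \<Rightarrow> 'a" and w :: 'a
  assumes elem_order_g: "elem_order g = n"
    and two_b_le: "2 * b \<le> n"
    and card_UNIV: "card (UNIV :: 'a set) = 2 * n * b * c"
    and r_separated:
      "\<And>k k'. k < 2 * b * c \<Longrightarrow> k' < 2 * b * c \<Longrightarrow> k \<noteq> k' \<Longrightarrow> r k - r k' \<notin> multiples g"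
    and r_pairs: "\<And>q. q < b * c \<Longrightarrow> r (2 * q) + r (2 * q + 1) = w"
begin

definition entry :: "nat \<Rightarrow> nat \<Rightarrow> nat \<Rightarrow> 'a" where
  "entry t i l = r (2 * b * t + l) + (if even l then natmul i g else - natmul i g)"

definition array :: "nat \<Rightarrow> nat \<Rightarrow> nat \<Rightarrow> 'a option" where
  "array t i j = (if diag_index n i j < 2 * b then Some (entry t i (diag_index n i j)) else None)"

lemma natmul_mod_n: "natmul (m mod n) g = natmul m g"
  by (simp add: natmul_eq_natmul_iff elem_order_g)

lemma row_filled: "{j. j < n \<and> array t i j \<noteq> None} = {j. j < n \<and> diag_index n i j < 2 * b}"
  by (auto simp: array_def)

lemma column_filled: "{i. i < n \<and> array t i j \<noteq> None} = {i. i < n \<and> diag_index n i j < 2 * b}"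
  by (auto simp: array_def)

lemma entry_pair_sum:
  assumes "t < c" "p < b"
  shows "entry t i (2 * p) + entry t i' (2 * p + 1) = w + natmul i g - natmul i' g"
proof -
  have "b * t + p < b * c"
    using mult_add_less_mult[OF assms] .
  then have "r (2 * b * t + 2 * p) + r (2 * b * t + (2 * p + 1)) = w"
    using r_pairs[of "b * t + p"] by (simp add: algebra_simps)
  then show ?thesis
    by (simp add: entry_def algebra_simps)
qed

lemma row_sum:
  assumes "t < c" "i < n"
  shows "(\<Sum>j\<in>{j. j < n \<and> array t i j \<noteq> None}. the (array t i j)) = natmul b w"
proof -
  have "(\<Sum>j\<in>{j. j < n \<and> array t i j \<noteq> None}. the (array t i j))
      = (\<Sum>l<2 * b. the (array t i ((i + l) mod n)))"
    unfolding row_filled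
    by (rule sum.reindex_bij_betw[symmetric]) (rule bij_betw_row_diagonals[OF assms(2) two_b_le])
  also have "\<dots> = (\<Sum>l<2 * b. entry t i l)"
    using assms(2) two_b_le by (intro sum.cong) (simp_all add: array_def diag_index_add_mod)
  also have "\<dots> = (\<Sum>p<b. entry t i (2 * p) + entry t i (2 * p + 1))"
    by (rule sum_lessThan_double)
  also have "\<dots> = (\<Sum>p<b. w)"
    using entry_pair_sum[OF assms(1)] by (intro sum.cong) auto
  finally show ?thesis
    by (simp add: natmul_def)
qed

lemma column_sum:
  assumes "t < c" "j < n"
  shows "(\<Sum>i\<in>{i. i < n \<and> array t i j \<noteq> None}. the (array t i j)) = natmul b (w + g)"
proof -
  let ?row = "\<lambda>l. (j + n - l) mod n"
  have "(\<Sum>i\<in>{i. i < n \<and> array t i j \<noteq> None}. the (array t i j))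
      = (\<Sum>l<2 * b. the (array t (?row l) j))"
    unfolding column_filled
    by (rule sum.reindex_bij_betw[symmetric]) (rule bij_betw_column_diagonals[OF assms(2) two_b_le])
  also have "\<dots> = (\<Sum>l<2 * b. entry t (?row l) l)"
    using assms(2) two_b_le by (intro sum.cong) (simp_all add: array_def diag_index_diff_mod)
  also have "\<dots> = (\<Sum>p<b. entry t (?row (2 * p)) (2 * p) + entry t (?row (2 * p + 1)) (2 * p + 1))"
    by (rule sum_lessThan_double)
  also have "\<dots> = (\<Sum>p<b. w + g)"
  proof (rule sum.cong)
    fix p assume "p \<in> {..<b}"
    then have "j + n - 2 * p = (j + n - (2 * p + 1)) + 1"
      using two_b_le by simp
    then have "natmul (?row (2 * p)) g = natmul (?row (2 * p + 1)) g + g"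
      by (simp add: natmul_mod_n natmul_Suc add.commute)
    then show "entry t (?row (2 * p)) (2 * p) + entry t (?row (2 * p + 1)) (2 * p + 1) = w + g"
      using entry_pair_sum[OF assms(1)] \<open>p \<in> {..<b}\<close> by simp
  qed simp
  finally show ?thesis
    by (simp add: natmul_def)
qed

lemma entry_eq_entryD:
  assumes ranges: "t < c" "i < n" "l < 2 * b" "t' < c" "i' < n" "l' < 2 * b"
    and eq: "entry t i l = entry t' i' l'"
  shows "t = t' \<and> i = i' \<and> l = l'"
proof -
  define s where "s l i = (if even l then natmul i g else - natmul i g)" for l i :: nat
  have s_mem: "s l i \<in> multiples g" for l i
    using add_subgroup.uminus_mem[OF add_subgroup_multiples[of g] natmul_in_multiples]
    by (simp add: s_def)
  have "r (2 * b * t + l) - r (2 * b * t' + l') = s l' i' - s l i"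
    using eq by (simp add: entry_def s_def algebra_simps)
  then have "r (2 * b * t + l) - r (2 * b * t' + l') \<in> multiples g"
    using add_subgroup.diff_mem[OF add_subgroup_multiples s_mem s_mem] by simp
  then have "2 * b * t + l = 2 * b * t' + l'"
    using r_separated mult_add_less_mult ranges by (metis mult.commute)
  then have "t = t'" "l = l'"
    using mult_add_eq_mult_add_iff[of l "2 * b" l'] ranges by auto
  then have "natmul i g = natmul i' g"
    using eq by (simp add: entry_def split: if_splits)
  then show ?thesis
    using inj_on_natmul[of g] ranges \<open>t = t'\<close> \<open>l = l'\<close> by (simp add: elem_order_g inj_on_def)
qed

lemma inj_on_entry: "inj_on (\<lambda>(t, i, l). entry t i l) ({..<c} \<times> {..<n} \<times> {..<2 * b})"
  using entry_eq_entryD by (auto simp: inj_on_def)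

lemma bij_betw_entries: "bij_betw (\<lambda>(t, i, j). the (array t i j)) (filled_cells n n c array) UNIV"
proof -
  let ?P = "{..<c} \<times> {..<n} \<times> {..<2 * b}"
  let ?cell = "\<lambda>(t, i, l). (t, i, (i + l) mod n)"
  have "bij_betw ?cell ?P (filled_cells n n c array)"
    using two_b_le
    by (intro bij_betw_byWitness[where f' = "\<lambda>(t, i, j). (t, i, diag_index n i j)"])
      (auto simp: filled_cells_def array_def diag_index_add_mod add_diag_index_mod)
  moreover have "bij_betw (\<lambda>(t, i, l). entry t i l) ?P UNIV"
  proof -
    have "card ?P = card (UNIV :: 'a set)"
      by (simp add: card_UNIV card_cartesian_product)
    then show ?thesis
      using inj_on_entry by (simp add: bij_betw_def card_image card_eq_UNIV_imp_eq_UNIV)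
  qed
  moreover have "bij_betw ((\<lambda>(t, i, j). the (array t i j)) \<circ> ?cell) ?P UNIV
      \<longleftrightarrow> bij_betw (\<lambda>(t, i, l). entry t i l) ?P UNIV"
    using two_b_le by (intro bij_betw_cong) (auto simp: array_def diag_index_add_mod)
  ultimately show ?thesis
    using bij_betw_comp_iff by blast
qed

theorem is_diagonal_MRS_array: "is_diagonal_MRS n (2 * b) c array"
proof -
  have "card {j. j < n \<and> array t i j \<noteq> None} = 2 * b" if "i < n" for t i
    unfolding row_filled using bij_betw_same_card[OF bij_betw_row_diagonals[OF that two_b_le]]
    by simp
  moreover have "card {i. i < n \<and> array t i j \<noteq> None} = 2 * b" if "j < n" for t j
    unfolding column_filled using bij_betw_same_card[OF bij_betw_column_diagonals[OF that two_b_le]]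
    by simp
  ultimately have "is_MRS n n (2 * b) (2 * b) c array"
    unfolding is_MRS_def using card_UNIV bij_betw_entries row_sum column_sum
    by (auto simp: algebra_simps)
  moreover have "array t i j \<noteq> None \<longleftrightarrow> (\<exists>l<2 * b. on_diagonal n (0 + l) i j)"
    if "i < n" "j < n" for t i j
    using that two_b_le by (auto simp: array_def on_diagonal_iff_diag_index)
  ultimately show ?thesis
    unfolding is_diagonal_MRS_def by blast
qed

end

theorem corollary5p7:
  fixes b n c :: nat
  assumes "0 < b" "0 < n" "0 < c"
    and "2 \<le> 2 * b" "2 * b \<le> n"
    and "card (UNIV :: ('a::{ab_group_add,finite}) set) = 2 * n * b * c"
  shows "((\<exists>x::'a. elem_order x = n) \<longrightarrow>
            (\<exists>A :: nat \<Rightarrow> nat \<Rightarrow> nat \<Rightarrow> 'a option. is_diagonal_MRS n (2 * b) c A))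
       \<and> (n dvd group_exponent TYPE('a) \<longrightarrow>
            (\<exists>A :: nat \<Rightarrow> nat \<Rightarrow> nat \<Rightarrow> 'a option. is_diagonal_MRS n (2 * b) c A))"
proof -
  have diagonal_MRS: "\<exists>A :: nat \<Rightarrow> nat \<Rightarrow> nat \<Rightarrow> 'a option. is_diagonal_MRS n (2 * b) c A"
    if order_g: "elem_order g = n" for g :: 'a
  proof -
    have "card (UNIV :: 'a set) = 2 * card (multiples g) * (b * c)"
      using assms(6) order_g by (simp add: card_multiples algebra_simps)
    then obtain w r
      where "\<forall>k<2 * (b * c). \<forall>k'<2 * (b * c). k \<noteq> k' \<longrightarrow> r k - r k' \<notin> multiples g"
        and "\<forall>q<b * c. r (2 * q) + r (2 * q + 1) = w"
      using add_subgroup.exists_paired_coset_representatives[OF add_subgroup_multiples] by blast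
    then interpret diagonal_construction g n b c r w
      using order_g assms(5,6) by unfold_locales (auto simp: mult.assoc)
    show ?thesis
      using is_diagonal_MRS_array by blast
  qed
  then show ?thesis
    using exists_elem_order_eq[OF _ assms(2)] by blast
qed

end
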